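(* Let $f$ be analytic on $\mathbb{D}$ with $\operatorname{Diam} f(\mathbb{D})\le 2$. Then for all $z\in\mathbb{D}$, \[ |f(z)-f(0)|\le |z|\,\frac{2}{1+\sqrt{1-|z|^2}}. \] Moreover, equality holds at some point $z\in\mathbb{D}\setminus\{0\}$ if and only if \[ f(z)=c\,\frac{z-b}{1-\bar b z}+a \quad (z\in\mathbb{D}) \] for some constants $a\in\mathbb{C}$, $b\in\mathbb{D}\setminus\{0\}$ and $c\in\mathbb{C}$ with $|c|=1$.
   Context: $\mathbb{D}$ is the open unit disk; $\operatorname{Diam}E=\sup_{z,w\in E}|z-w|$. *)

theory Defs
  imports "HOL-Complex_Analysis.Complex_Analysis"
begin

text \<open>Diam E = sup over z, w in E of |z - w|, taken in the extended reals
  (so that an unbounded set has diameter infinity).\<close>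
definition Diam :: "complex set \<Rightarrow> ereal" where
  "Diam E = (SUP z\<in>E. SUP w\<in>E. ereal (cmod (z - w)))"

end

theory Submission
  imports Defs
begin

text \<open>For z in the disk put p = z / (1 + sqrt (1 - \<bar>z\<bar>^2)). The disk automorphism
  \<phi>(\<zeta>) = (\<zeta> + p) / (1 + cnj p \<zeta>) maps p to z and -p to 0, and the claimed bound equals 2\<bar>p\<bar>.
  For F = f \<circ> \<phi> the odd part (F(\<zeta>) - F(-\<zeta>)) / 2 maps the disk into the closed unit disk and
  vanishes at 0, so the Schwarz lemma at \<zeta> = p gives \<bar>f(z) - f(0)\<bar> \<le> 2\<bar>p\<bar>.

  In the case of equality the Schwarz lemma forces F(\<zeta>) - F(-\<zeta>) = 2\<alpha>\<zeta> with \<bar>\<alpha>\<bar> = 1.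
  For unimodular l the quotient (F(w) - F(-l w)) / (2w) is bounded by 1 and has modulus
  sqrt (1 - \<bar>1 - l\<bar>^2 / 4) at 0, so by the Schwarz-Pick lemma E = F - \<alpha> id satisfies
  \<bar>E(\<zeta>) - E(l\<zeta>)\<bar> = O(\<bar>1 - l\<bar>^2). Hence the derivative of E along circles vanishes, E is
  constant, and f = \<alpha> \<phi>^-1 + const.\<close>

lemma Diam_mono: "A \<subseteq> B \<Longrightarrow> Diam A \<le> Diam B"
  unfolding Diam_def by (intro SUP_subset_mono) auto

lemma norm_diff_le_if_Diam_le:
  assumes "Diam E \<le> ereal d" "z \<in> E" "w \<in> E"
  shows "cmod (z - w) \<le> d"
proof -
  have "ereal (cmod (z - w)) \<le> Diam E"
    unfolding Diam_def using assms by (intro SUP_upper2[of z] SUP_upper[of w]) auto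
  then have "ereal (cmod (z - w)) \<le> ereal d"
    using assms(1) by (rule order_trans)
  then show ?thesis
    by simp
qed

lemma Schwarz_Lemma_le:
  assumes holf: "f holomorphic_on ball 0 1" and f0: "f 0 = 0"
    and le: "\<And>z. norm z < 1 \<Longrightarrow> norm (f z) \<le> 1" and z: "norm z < 1"
  shows "norm (f z) \<le> norm z"
proof (rule field_le_mult_one_interval)
  fix t :: real assume t: "0 < t" "t < 1"
  have "norm (of_real t * f z) \<le> norm z"
  proof (rule Schwarz_Lemma(1)[where f = "\<lambda>w. of_real t * f w", OF _ _ _ z])
    show "(\<lambda>w. of_real t * f w) holomorphic_on ball 0 1"
      using holf by (intro holomorphic_intros)
    show "norm (of_real t * f w) < 1" if "norm w < 1" for w
    proof -
      have "norm (of_real t * f w) = t * norm (f w)" using t by (simp add: norm_mult)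
      also have "\<dots> \<le> t" using mult_left_mono[OF le[OF that], of t] t by simp
      finally show ?thesis using t by simp
    qed
  qed (simp add: f0)
  then show "t * norm (f z) \<le> norm z" using t by (simp add: norm_mult)
qed

lemma norm_one_minus_cnj_mult_square:
  "(cmod (1 - cnj a * u))\<^sup>2 - (cmod (u - a))\<^sup>2 = (1 - (cmod a)\<^sup>2) * (1 - (cmod u)\<^sup>2)"
  unfolding cmod_power2 by (simp add: power2_eq_square algebra_simps)

lemma complex_parallelogram_law:
  "(cmod (a + b))\<^sup>2 + (cmod (a - b))\<^sup>2 = 2 * (cmod a)\<^sup>2 + 2 * (cmod b)\<^sup>2"
  unfolding cmod_power2 by (simp add: power2_eq_square algebra_simps)

lemma norm_diff_le_norm_one_minus_cnj_mult:
  assumes "cmod a \<le> 1" "cmod u \<le> 1"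
  shows "cmod (u - a) \<le> cmod (1 - cnj a * u)"
proof -
  have "0 \<le> (1 - (cmod a)\<^sup>2) * (1 - (cmod u)\<^sup>2)"
    using assms by (intro mult_nonneg_nonneg) (auto simp: power_le_one)
  then have "(cmod (u - a))\<^sup>2 \<le> (cmod (1 - cnj a * u))\<^sup>2"
    using norm_one_minus_cnj_mult_square[of a u] by linarith
  then show ?thesis by (rule power2_le_imp_le) simp
qed

lemma Schwarz_Pick_le:
  assumes holh: "h holomorphic_on ball 0 1" and le: "\<And>z. norm z < 1 \<Longrightarrow> norm (h z) \<le> 1"
    and h0: "norm (h 0) < 1" and z: "norm z < 1"
  shows "norm (h z - h 0) \<le> norm z * norm (1 - cnj (h 0) * h z)"
proof -
  have nz: "1 - cnj (h 0) * h w \<noteq> 0" if "norm w < 1" for w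
  proof
    assume "1 - cnj (h 0) * h w = 0"
    then have "norm (cnj (h 0) * h w) = 1" by (metis eq_iff_diff_eq_0 norm_one)
    moreover have "norm (h 0) * norm (h w) < 1"
      using h0 le[OF that] by (metis le_less_trans mult_left_le norm_ge_zero)
    ultimately show False by (simp add: norm_mult)
  qed
  define K where "K w = (h w - h 0) / (1 - cnj (h 0) * h w)" for w
  have "norm (K z) \<le> norm z"
  proof (rule Schwarz_Lemma_le[OF _ _ _ z])
    show "K holomorphic_on ball 0 1"
      unfolding K_def using nz by (intro holomorphic_intros holh) auto
    show "norm (K w) \<le> 1" if "norm w < 1" for w
      using norm_diff_le_norm_one_minus_cnj_mult[OF less_imp_le[OF h0] le[OF that]] nz[OF that]
      by (simp add: K_def norm_divide divide_le_eq_1)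
  qed (simp add: K_def)
  then show ?thesis using nz[OF z] by (simp add: K_def norm_divide divide_le_eq)
qed

lemma Schwarz_Pick_diff_bound:
  assumes holh: "h holomorphic_on ball 0 1" and le: "\<And>z. norm z < 1 \<Longrightarrow> norm (h z) \<le> 1"
    and h0: "norm (h 0) < 1" and z: "norm z < 1"
  shows "norm (h z - h 0) \<le> norm z * (1 - (norm (h 0))\<^sup>2) / (1 - norm z)"
proof -
  define a d where "a = h 0" and "d = norm (h z - h 0)"
  have eq: "1 - cnj a * h z = of_real (1 - (norm a)\<^sup>2) - cnj a * (h z - a)"
    by (simp add: complex_norm_square[unfolded of_real_power] algebra_simps)
  have "norm (1 - cnj a * h z) \<le> norm (of_real (1 - (norm a)\<^sup>2) :: complex) + norm (cnj a * (h z - a))"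
    unfolding eq by (rule norm_triangle_ineq4)
  also have "\<dots> = (1 - (norm a)\<^sup>2) + norm a * d"
    using h0 unfolding norm_of_real by (simp add: a_def d_def norm_mult power_le_one)
  finally have "d \<le> norm z * ((1 - (norm a)\<^sup>2) + norm a * d)"
    using Schwarz_Pick_le[OF holh le h0 z] unfolding a_def d_def
    by (meson mult_left_mono norm_ge_zero order_trans)
  then have "d * (1 - norm z * norm a) \<le> norm z * (1 - (norm a)\<^sup>2)"
    by (simp add: algebra_simps)
  moreover have "d * (1 - norm z) \<le> d * (1 - norm z * norm a)"
    using h0 by (intro mult_left_mono) (auto simp: a_def d_def mult_left_le)
  ultimately show ?thesis
    using z by (simp add: a_def d_def le_divide_eq)
qed

lemma has_field_derivative_rotated_difference:
  assumes holF: "F holomorphic_on ball 0 1"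
  shows "((\<lambda>w. F w - F (-(l * w))) has_field_derivative deriv F 0 * (1 + l)) (at 0)"
proof -
  have dF: "(F has_field_derivative deriv F 0) (at x)" if "x = 0" for x
    unfolding that by (rule holomorphic_derivI[OF holF]) auto
  have "((\<lambda>w. F (-(l * w))) has_field_derivative deriv F 0 * (-l)) (at 0)"
    by (rule DERIV_chain2[OF dF]) (auto intro!: derivative_eq_intros)
  from DERIV_diff[OF dF[OF refl] this] show ?thesis by (simp add: algebra_simps)
qed

lemma deriv_eq_if_odd_part_linear:
  assumes holF: "F holomorphic_on ball 0 1"
    and odd: "\<And>z. z \<in> ball 0 1 \<Longrightarrow> F z - F (-z) = 2 * \<alpha> * z"
  shows "deriv F 0 = \<alpha>"
proof -
  have "((\<lambda>w. F w - F (-w)) has_field_derivative 2 * deriv F 0) (at 0)"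
    using has_field_derivative_rotated_difference[OF holF, of 1] by (simp add: mult.commute)
  then have "((\<lambda>w. 2 * \<alpha> * w) has_field_derivative 2 * deriv F 0) (at 0)"
    by (rule has_field_derivative_transform_within_open[of _ _ _ "ball 0 1"]) (auto simp: odd)
  moreover have "((\<lambda>w. 2 * \<alpha> * w) has_field_derivative 2 * \<alpha>) (at 0)"
    by (auto intro!: derivative_eq_intros)
  ultimately show ?thesis using DERIV_unique by fastforce
qed

lemma rotated_difference_quotient:
  assumes holF: "F holomorphic_on ball 0 1"
    and diam: "Diam (F ` ball 0 1) \<le> 2"
    and odd: "\<And>z. z \<in> ball 0 1 \<Longrightarrow> F z - F (-z) = 2 * \<alpha> * z" and \<alpha>: "cmod \<alpha> = 1"
    and l: "cmod l = 1"
  obtains h where "h holomorphic_on ball 0 1" "\<And>w. cmod w < 1 \<Longrightarrow> cmod (h w) \<le> 1"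
    "\<And>w. cmod w < 1 \<Longrightarrow> F w - F (-(l * w)) = 2 * w * h w" "h 0 = \<alpha> * (1 + l) / 2"
proof -
  define L where "L w = (F w - F (-(l * w))) / 2" for w
  have rot_in: "-(l * w) \<in> ball 0 1" if "w \<in> ball 0 1" for w
    using l that by (simp add: norm_mult)
  have "(F \<circ> (\<lambda>w. -(l * w))) holomorphic_on ball 0 1"
    using rot_in by (intro holomorphic_on_compose_gen[OF _ holF]) (auto intro: holomorphic_intros)
  then have holL: "L holomorphic_on ball 0 1"
    unfolding L_def o_def by (intro holomorphic_intros holF) auto
  have L0: "L 0 = 0" by (simp add: L_def)
  obtain h where holh: "h holomorphic_on ball 0 1" and Lh: "\<And>w. norm w < 1 \<Longrightarrow> L w = w * h w"
      and h0: "deriv L 0 = h 0"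
    using Schwarz3[OF holL L0] by blast
  have "(L has_field_derivative deriv F 0 * (1 + l) / 2) (at 0)"
    unfolding L_def by (intro DERIV_cdivide has_field_derivative_rotated_difference holF)
  then have h0_eq: "h 0 = \<alpha> * (1 + l) / 2"
    using deriv_eq_if_odd_part_linear[OF holF odd] h0 DERIV_imp_deriv by fastforce
  have "cmod (h w) \<le> 1" if w: "cmod w < 1" for w
  proof (cases "w = 0")
    case True
    then show ?thesis
      using norm_triangle_ineq[of 1 l] l \<alpha> by (simp add: h0_eq norm_mult norm_divide)
  next
    case False
    have "cmod (L w) \<le> cmod w"
    proof (rule Schwarz_Lemma_le[OF holL L0 _ w])
      show "cmod (L v) \<le> 1" if "cmod v < 1" for v
        using norm_diff_le_if_Diam_le[of "F ` ball 0 1" 2 "F v" "F (-(l * v))"] diam rot_in[of v] that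
        by (simp add: L_def norm_divide)
    qed
    then show ?thesis using Lh[OF w] False by (simp add: norm_mult)
  qed
  moreover have "F w - F (-(l * w)) = 2 * w * h w" if "cmod w < 1" for w
    using Lh[OF that] by (simp add: L_def field_simps)
  ultimately show ?thesis
    using that holh h0_eq by blast
qed

lemma rotation_difference_bound:
  assumes holF: "F holomorphic_on ball 0 1"
    and diam: "Diam (F ` ball 0 1) \<le> 2"
    and odd: "\<And>z. z \<in> ball 0 1 \<Longrightarrow> F z - F (-z) = 2 * \<alpha> * z" and \<alpha>: "cmod \<alpha> = 1"
    and l: "cmod l = 1" and \<zeta>: "cmod \<zeta> < 1"
  shows "cmod ((F \<zeta> - \<alpha> * \<zeta>) - (F (l * \<zeta>) - \<alpha> * (l * \<zeta>))) \<le> (cmod (1 - l))\<^sup>2 / (2 * (1 - cmod \<zeta>))"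
proof (cases "l = 1")
  case True
  then show ?thesis by simp
next
  case False
  obtain h where holh: "h holomorphic_on ball 0 1" and h_le: "\<And>w. cmod w < 1 \<Longrightarrow> cmod (h w) \<le> 1"
      and Fh: "\<And>w. cmod w < 1 \<Longrightarrow> F w - F (-(l * w)) = 2 * w * h w" and h0: "h 0 = \<alpha> * (1 + l) / 2"
    using rotated_difference_quotient[OF holF diam odd \<alpha> l] by blast
  have "(cmod (1 + l))\<^sup>2 + (cmod (1 - l))\<^sup>2 = 4"
    using complex_parallelogram_law[of 1 l] l by simp
  moreover have "(cmod (1 + l))\<^sup>2 = 4 * (cmod (h 0))\<^sup>2"
    using \<alpha> by (simp add: h0 norm_mult norm_divide power_divide)
  ultimately have h0_sq: "1 - (cmod (h 0))\<^sup>2 = (cmod (1 - l))\<^sup>2 / 4"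
    by linarith
  have "0 < (cmod (1 - l))\<^sup>2"
    using False by simp
  then have "(cmod (h 0))\<^sup>2 < 1"
    using h0_sq by linarith
  then have h0_lt: "cmod (h 0) < 1"
    by (simp add: abs_square_less_1)
  have "l * \<zeta> \<in> ball 0 1"
    using l \<zeta> by (simp add: norm_mult)
  then have "(F \<zeta> - \<alpha> * \<zeta>) - (F (l * \<zeta>) - \<alpha> * (l * \<zeta>)) = 2 * \<zeta> * (h \<zeta> - h 0)"
    using Fh[OF \<zeta>] odd[of "l * \<zeta>"] unfolding h0 by (simp add: field_simps)
  also have "cmod \<dots> = 2 * cmod \<zeta> * cmod (h \<zeta> - h 0)"
    by (simp add: norm_mult)
  also have "\<dots> \<le> 2 * cmod \<zeta> * (cmod \<zeta> * ((cmod (1 - l))\<^sup>2 / 4) / (1 - cmod \<zeta>))"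
    using Schwarz_Pick_diff_bound[of h, OF holh h_le h0_lt \<zeta>] unfolding h0_sq
    by (intro mult_left_mono) auto
  also have "\<dots> = (cmod \<zeta>)\<^sup>2 * ((cmod (1 - l))\<^sup>2 / (2 * (1 - cmod \<zeta>)))"
    using \<zeta> by (simp add: field_simps power2_eq_square)
  also have "\<dots> \<le> (cmod (1 - l))\<^sup>2 / (2 * (1 - cmod \<zeta>))"
    using \<zeta> by (intro mult_left_le_one_le) (auto simp: power_le_one)
  finally show ?thesis .
qed

lemma vector_derivative_eq_0_if_quadratic_bound:
  fixes g :: "real \<Rightarrow> 'a::real_normed_vector"
  assumes D: "(g has_vector_derivative D) (at 0)"
    and bound: "\<And>t. norm (g t - g 0) \<le> K * t\<^sup>2"
  shows "D = 0"
proof -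
  have "((\<lambda>h. norm (g h - g 0) / \<bar>h\<bar>) \<longlongrightarrow> 0) (at 0)"
  proof (rule Lim_null_comparison)
    have "norm (norm (g h - g 0) / \<bar>h\<bar>) \<le> K * \<bar>h\<bar>" for h
    proof (cases "h = 0")
      case False
      have "norm (g h - g 0) \<le> K * \<bar>h\<bar> * \<bar>h\<bar>"
        using bound[of h] by (simp add: power2_eq_square mult.assoc)
      then show ?thesis using False by (simp add: divide_le_eq)
    qed simp
    then show "\<forall>\<^sub>F h in at 0. norm (norm (g h - g 0) / \<bar>h\<bar>) \<le> K * \<bar>h\<bar>"
      by simp
    show "((\<lambda>h. K * \<bar>h\<bar>) \<longlongrightarrow> 0) (at 0)"
      by (auto intro!: tendsto_eq_intros)
  qed
  then have "(g has_vector_derivative 0) (at 0)"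
    by (simp add: has_vector_derivative_def has_derivative_at)
  with D show ?thesis
    using vector_derivative_unique_at by blast
qed

lemma holomorphic_constant_if_rotations_quadratic:
  assumes holE: "E holomorphic_on ball 0 1"
    and rot: "\<And>\<zeta>. cmod \<zeta> < 1 \<Longrightarrow> \<exists>K. \<forall>t. cmod (E (exp (\<i> * of_real t) * \<zeta>) - E \<zeta>) \<le> K * t\<^sup>2"
    and \<zeta>: "cmod \<zeta> < 1"
  shows "E \<zeta> = E 0"
proof -
  have "(E has_field_derivative 0) (at \<xi>)" if \<xi>: "\<xi> \<in> ball 0 1 - {0}" for \<xi>
  proof -
    have dE: "(E has_field_derivative deriv E \<xi>) (at \<xi>)"
      using \<xi> by (intro holomorphic_derivI[OF holE]) auto
    have "((\<lambda>t. exp (\<i> * of_real t) * \<xi>) has_vector_derivative \<i> * \<xi>) (at 0)"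
      by (rule has_vector_derivative_real_field) (auto intro!: derivative_eq_intros)
    from field_vector_diff_chain_at[OF this] dE
    have "((\<lambda>t. E (exp (\<i> * of_real t) * \<xi>)) has_vector_derivative \<i> * \<xi> * deriv E \<xi>) (at 0)"
      by (simp add: o_def)
    moreover obtain K where "\<forall>t. cmod (E (exp (\<i> * of_real t) * \<xi>) - E \<xi>) \<le> K * t\<^sup>2"
      using rot \<xi> by auto
    ultimately have "\<i> * \<xi> * deriv E \<xi> = 0"
      by (intro vector_derivative_eq_0_if_quadratic_bound) auto
    then show ?thesis
      using dE \<xi> by simp
  qed
  then obtain c where "\<And>\<xi>. \<xi> \<in> ball 0 1 \<Longrightarrow> E \<xi> = c"
    using DERIV_zero_connected_constant[of "ball 0 1" "{0}" E] holE
    by (auto intro: holomorphic_on_imp_continuous_on)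
  then show ?thesis
    using \<zeta> by simp
qed

lemma norm_one_minus_exp_i_le: "cmod (1 - exp (\<i> * of_real t)) \<le> \<bar>t\<bar>"
proof -
  have "cmod (1 - exp (\<i> * of_real t)) = 2 * \<bar>sin (t / 2)\<bar>"
    using dist_exp_i_1[of t] by (simp add: norm_minus_commute)
  also have "\<dots> \<le> \<bar>t\<bar>"
    using abs_sin_x_le_abs_x[of "t / 2"] by simp
  finally show ?thesis .
qed

lemma odd_part_linear_imp_linear:
  assumes holF: "F holomorphic_on ball 0 1"
    and diam: "Diam (F ` ball 0 1) \<le> 2"
    and odd: "\<And>z. z \<in> ball 0 1 \<Longrightarrow> F z - F (-z) = 2 * \<alpha> * z" and \<alpha>: "cmod \<alpha> = 1"
    and \<zeta>: "cmod \<zeta> < 1"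
  shows "F \<zeta> = \<alpha> * \<zeta> + F 0"
proof -
  define E where "E z = F z - \<alpha> * z" for z
  have "E \<zeta> = E 0"
  proof (rule holomorphic_constant_if_rotations_quadratic[OF _ _ \<zeta>])
    show "E holomorphic_on ball 0 1"
      unfolding E_def by (intro holomorphic_intros holF)
    fix \<xi> :: complex assume \<xi>: "cmod \<xi> < 1"
    have "cmod (E (exp (\<i> * of_real t) * \<xi>) - E \<xi>) \<le> 1 / (2 * (1 - cmod \<xi>)) * t\<^sup>2" for t
    proof -
      have "(cmod (1 - exp (\<i> * of_real t)))\<^sup>2 \<le> t\<^sup>2"
        using power_mono[OF norm_one_minus_exp_i_le norm_ge_zero, of t 2] by simp
      moreover have "cmod (E (exp (\<i> * of_real t) * \<xi>) - E \<xi>)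
          \<le> (cmod (1 - exp (\<i> * of_real t)))\<^sup>2 / (2 * (1 - cmod \<xi>))"
        using rotation_difference_bound[OF holF diam odd \<alpha> _ \<xi>, of "exp (\<i> * of_real t)"]
        by (simp add: E_def norm_minus_commute)
      ultimately show ?thesis
        using \<xi> by (simp add: divide_right_mono order_trans)
    qed
    then show "\<exists>K. \<forall>t. cmod (E (exp (\<i> * of_real t) * \<xi>) - E \<xi>) \<le> K * t\<^sup>2"
      by blast
  qed
  then show ?thesis
    by (simp add: E_def algebra_simps)
qed

lemma odd_part_Schwarz:
  assumes holF: "F holomorphic_on ball 0 1"
    and diam: "Diam (F ` ball 0 1) \<le> 2"
    and \<zeta>: "cmod \<zeta> < 1"
  shows "cmod (F \<zeta> - F (-\<zeta>)) \<le> 2 * cmod \<zeta>"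
    and "cmod (F \<zeta> - F (-\<zeta>)) = 2 * cmod \<zeta> \<Longrightarrow> \<zeta> \<noteq> 0 \<Longrightarrow>
      \<exists>\<alpha>. cmod \<alpha> = 1 \<and> (\<forall>z\<in>ball 0 1. F z - F (-z) = 2 * \<alpha> * z)"
proof -
  define G where "G z = (F z - F (-z)) / 2" for z
  have "(F \<circ> uminus) holomorphic_on ball 0 1"
    by (intro holomorphic_on_compose_gen[OF _ holF]) (auto intro: holomorphic_intros)
  then have holG: "G holomorphic_on ball 0 1"
    unfolding G_def o_def by (intro holomorphic_intros holF) auto
  have G0: "G 0 = 0"
    by (simp add: G_def)
  have "cmod (G z) \<le> 1" if "cmod z < 1" for z
    using norm_diff_le_if_Diam_le[of "F ` ball 0 1" 2 "F z" "F (-z)"] diam that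
    by (simp add: G_def norm_divide)
  then have G_le: "cmod (G z) \<le> cmod z" if "cmod z < 1" for z
    using Schwarz_Lemma_le[OF holG G0 _ that] by blast
  show "cmod (F \<zeta> - F (-\<zeta>)) \<le> 2 * cmod \<zeta>"
    using G_le[OF \<zeta>] by (simp add: G_def norm_divide mult.commute)
  assume "cmod (F \<zeta> - F (-\<zeta>)) = 2 * cmod \<zeta>" "\<zeta> \<noteq> 0"
  then obtain \<alpha> where "\<forall>z. cmod z < 1 \<longrightarrow> G z = \<alpha> * z" "cmod \<alpha> = 1"
    using Schwarz_Lemma(3)[OF holG G0 _ \<zeta>] G_le \<zeta> by (fastforce simp: G_def norm_divide)
  then show "\<exists>\<alpha>. cmod \<alpha> = 1 \<and> (\<forall>z\<in>ball 0 1. F z - F (-z) = 2 * \<alpha> * z)"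
    by (auto simp: G_def)
qed

lemma Moebius_function_neg_self:
  "Moebius_function 0 (-p) p = 2 * p / of_real (1 + (cmod p)\<^sup>2)"
  by (simp add: Moebius_function_simple complex_norm_square[unfolded of_real_power] mult.commute)

lemma Moebius_function_neg_self_eq_0_iff:
  "Moebius_function 0 (-p) p = 0 \<longleftrightarrow> p = 0"
proof -
  have "1 + (cmod p)\<^sup>2 \<noteq> 0"
    by (smt (verit) zero_le_power2)
  then have "of_real (1 + (cmod p)\<^sup>2) \<noteq> (0 :: complex)"
    by (metis of_real_eq_0_iff)
  then show ?thesis
    by (simp add: Moebius_function_neg_self)
qed

lemma Moebius_function_neg_self_extremal_radius:
  assumes "cmod p < 1"
  defines "z \<equiv> Moebius_function 0 (-p) p"
  shows "cmod z * (2 / (1 + sqrt (1 - (cmod z)\<^sup>2))) = 2 * cmod p"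
proof -
  define \<rho> where "\<rho> = cmod p"
  have \<rho>: "0 \<le> \<rho>" "\<rho> < 1"
    using assms by (auto simp: \<rho>_def)
  have pos: "0 < 1 + \<rho>\<^sup>2"
    by (simp add: add_pos_nonneg)
  have nz: "cmod z = 2 * \<rho> / (1 + \<rho>\<^sup>2)"
    using pos unfolding z_def Moebius_function_neg_self norm_divide norm_mult norm_of_real \<rho>_def
    by simp
  have "(1 + \<rho>\<^sup>2)\<^sup>2 - (2 * \<rho>)\<^sup>2 = (1 - \<rho>\<^sup>2)\<^sup>2"
    by (simp add: power2_eq_square algebra_simps)
  then have "1 - (cmod z)\<^sup>2 = ((1 - \<rho>\<^sup>2) / (1 + \<rho>\<^sup>2))\<^sup>2"
    using pos unfolding nz power_divide by (simp add: diff_divide_eq_iff)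
  moreover have "0 \<le> (1 - \<rho>\<^sup>2) / (1 + \<rho>\<^sup>2)"
    using \<rho> pos by (simp add: power_le_one)
  ultimately have "sqrt (1 - (cmod z)\<^sup>2) = (1 - \<rho>\<^sup>2) / (1 + \<rho>\<^sup>2)"
    by (metis real_sqrt_abs abs_of_nonneg)
  then show ?thesis
    using pos unfolding nz \<rho>_def by (simp add: field_simps)
qed

lemma Moebius_function_neg_self_surj:
  assumes z: "cmod z < 1"
  obtains p where "cmod p < 1" "Moebius_function 0 (-p) p = z"
proof
  define s where "s = sqrt (1 - (cmod z)\<^sup>2)"
  have s: "0 \<le> s" "s\<^sup>2 = 1 - (cmod z)\<^sup>2"
    using z by (auto simp: s_def power_le_one)
  define q :: complex where "q = of_real (1 + s)"
  have q: "q \<noteq> 0" "cmod q = 1 + s"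
    using s by (auto simp: q_def simp del: of_real_add)
  define p where "p = z / q"
  have np: "cmod p = cmod z / (1 + s)"
    using q by (simp add: p_def norm_divide)
  then show "cmod p < 1"
    using s z by (simp add: divide_less_eq)
  have "(cmod z)\<^sup>2 = (1 - s) * (1 + s)"
    using s by (simp add: algebra_simps power2_eq_square)
  then have "(cmod p)\<^sup>2 = (1 - s) / (1 + s)"
    using s unfolding np power_divide by (simp add: power2_eq_square)
  then have "(1 + s) * (1 + (cmod p)\<^sup>2) = 2"
    using s by (simp add: field_simps)
  then have "q * of_real (1 + (cmod p)\<^sup>2) = 2"
    unfolding q_def by (metis of_real_mult of_real_numeral)
  then show "Moebius_function 0 (-p) p = z"
    using q unfolding Moebius_function_neg_self by (simp add: p_def field_simps)
qed

lemma diameter_two_Moebius_point_bound: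
  assumes holf: "f holomorphic_on ball 0 1"
    and diam: "Diam (f ` ball 0 1) \<le> 2"
    and p: "cmod p < 1"
  shows "cmod (f (Moebius_function 0 (-p) p) - f 0) \<le> 2 * cmod p"
    and "cmod (f (Moebius_function 0 (-p) p) - f 0) = 2 * cmod p \<Longrightarrow> p \<noteq> 0 \<Longrightarrow>
      \<exists>a c. cmod c = 1 \<and> (\<forall>w\<in>ball 0 1. f w = c * ((w - p) / (1 - cnj p * w)) + a)"
proof -
  define F where "F = f \<circ> Moebius_function 0 (-p)"
  have maps: "Moebius_function 0 (-p) ` ball 0 1 \<subseteq> ball 0 1"
    using Moebius_function_norm_lt_1[of "-p"] p by auto
  have holF: "F holomorphic_on ball 0 1"
    unfolding F_def using Moebius_function_holomorphic[of "-p"] p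
    by (intro holomorphic_on_compose_gen[OF _ holf maps]) auto
  have "Diam (F ` ball 0 1) \<le> Diam (f ` ball 0 1)"
    unfolding F_def image_comp[symmetric] by (intro Diam_mono image_mono maps)
  then have diamF: "Diam (F ` ball 0 1) \<le> 2"
    using diam by (rule order_trans)
  have Fp: "F p - F (-p) = f (Moebius_function 0 (-p) p) - f 0"
    by (simp add: F_def Moebius_function_eq_zero)
  show "cmod (f (Moebius_function 0 (-p) p) - f 0) \<le> 2 * cmod p"
    using odd_part_Schwarz(1)[OF holF diamF p] unfolding Fp .
  assume "cmod (f (Moebius_function 0 (-p) p) - f 0) = 2 * cmod p" "p \<noteq> 0"
  then obtain \<alpha> where \<alpha>: "cmod \<alpha> = 1" and odd: "\<forall>z\<in>ball 0 1. F z - F (-z) = 2 * \<alpha> * z"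
    using odd_part_Schwarz(2)[OF holF diamF p] unfolding Fp by blast
  have "f w = \<alpha> * ((w - p) / (1 - cnj p * w)) + F 0" if w: "w \<in> ball 0 1" for w
  proof -
    have "f w = F (Moebius_function 0 p w)"
      using Moebius_function_compose[of "-p" p w] p w by (simp add: F_def)
    also have "\<dots> = \<alpha> * Moebius_function 0 p w + F 0"
    proof (rule odd_part_linear_imp_linear[OF holF diamF _ \<alpha>])
      show "cmod (Moebius_function 0 p w) < 1"
        using Moebius_function_norm_lt_1 p w by auto
    qed (use odd in auto)
    finally show ?thesis
      by (simp add: Moebius_function_simple)
  qed
  with \<alpha> show "\<exists>a c. cmod c = 1 \<and> (\<forall>w\<in>ball 0 1. f w = c * ((w - p) / (1 - cnj p * w)) + a)"
    by blast
qed

lemma diameter_two_bound: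
  assumes holf: "f holomorphic_on ball 0 1" and diam: "Diam (f ` ball 0 1) \<le> 2"
    and "z \<in> ball 0 1"
  shows "cmod (f z - f 0) \<le> cmod z * (2 / (1 + sqrt (1 - (cmod z)\<^sup>2)))"
proof -
  obtain p where p: "cmod p < 1" and z: "Moebius_function 0 (-p) p = z"
    using assms(3) by (metis mem_ball_0 Moebius_function_neg_self_surj)
  show ?thesis
    using diameter_two_Moebius_point_bound(1)[OF holf diam p]
      Moebius_function_neg_self_extremal_radius[OF p]
    unfolding z by linarith
qed

lemma diameter_two_bound_eq_imp_Moebius:
  assumes holf: "f holomorphic_on ball 0 1" and diam: "Diam (f ` ball 0 1) \<le> 2"
    and "z \<in> ball 0 1" "z \<noteq> 0"
    and eq: "cmod (f z - f 0) = cmod z * (2 / (1 + sqrt (1 - (cmod z)\<^sup>2)))"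
  shows "\<exists>a b c. b \<in> ball 0 1 - {0} \<and> cmod c = 1 \<and>
    (\<forall>z\<in>ball 0 1. f z = c * ((z - b) / (1 - cnj b * z)) + a)"
proof -
  obtain p where p: "cmod p < 1" and z: "Moebius_function 0 (-p) p = z"
    using assms(3) by (metis mem_ball_0 Moebius_function_neg_self_surj)
  have "p \<noteq> 0"
    using \<open>z \<noteq> 0\<close> z Moebius_function_neg_self_eq_0_iff by blast
  moreover have "cmod (f (Moebius_function 0 (-p) p) - f 0) = 2 * cmod p"
    using eq Moebius_function_neg_self_extremal_radius[OF p] unfolding z by linarith
  ultimately obtain a c where "cmod c = 1"
      "\<forall>w\<in>ball 0 1. f w = c * ((w - p) / (1 - cnj p * w)) + a"
    using diameter_two_Moebius_point_bound(2)[OF holf diam p] by blast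
  with p \<open>p \<noteq> 0\<close> show ?thesis
    by auto
qed

lemma Moebius_attains_diameter_two_bound:
  assumes b: "b \<in> ball 0 1 - {0}" and c: "cmod c = 1"
    and f: "\<forall>z\<in>ball 0 1. f z = c * ((z - b) / (1 - cnj b * z)) + a"
  shows "\<exists>z\<in>ball 0 1 - {0}. cmod (f z - f 0) = cmod z * (2 / (1 + sqrt (1 - (cmod z)\<^sup>2)))"
proof
  define z where "z = Moebius_function 0 (-b) b"
  have "cmod z < 1"
    using Moebius_function_norm_lt_1[of "-b" b] b by (simp add: z_def)
  then show "z \<in> ball 0 1 - {0}"
    using Moebius_function_neg_self_eq_0_iff[of b] b by (simp add: z_def)
  have "f z = c * Moebius_function 0 b z + a"
    using f \<open>cmod z < 1\<close> by (simp add: Moebius_function_simple)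
  also have "Moebius_function 0 b z = b"
    unfolding z_def using b by (intro Moebius_function_compose) auto
  finally have "cmod (f z - f 0) = 2 * cmod b"
    using f c by (simp add: norm_mult)
  also have "\<dots> = cmod z * (2 / (1 + sqrt (1 - (cmod z)\<^sup>2)))"
    using Moebius_function_neg_self_extremal_radius[of b] b by (simp add: z_def)
  finally show "cmod (f z - f 0) = cmod z * (2 / (1 + sqrt (1 - (cmod z)\<^sup>2)))" .
qed

theorem theorem6:
  fixes f :: "complex \<Rightarrow> complex"
  assumes "f analytic_on ball 0 1"
    and "Diam (f ` ball 0 1) \<le> 2"
  shows "(\<forall>z\<in>ball 0 1. cmod (f z - f 0) \<le> cmod z * (2 / (1 + sqrt (1 - (cmod z)\<^sup>2))))
    \<and> ((\<exists>z\<in>ball 0 1 - {0}. cmod (f z - f 0) = cmod z * (2 / (1 + sqrt (1 - (cmod z)\<^sup>2))))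
        \<longleftrightarrow> (\<exists>a b c. b \<in> ball 0 1 - {0} \<and> cmod c = 1 \<and>
               (\<forall>z\<in>ball 0 1. f z = c * ((z - b) / (1 - cnj b * z)) + a)))"
proof -
  have holf: "f holomorphic_on ball 0 1"
    using assms(1) by (rule analytic_imp_holomorphic)
  show ?thesis
    using diameter_two_bound[OF holf assms(2)] diameter_two_bound_eq_imp_Moebius[OF holf assms(2)]
      Moebius_attains_diameter_two_bound
    by blast
qed

end
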